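(* Assume (A1)–(A4). Let $u,v\in C(\overline{Q_T})$ be viscosity solutions of $\partial_t^\alpha u+H(t,x,u,Du)=0$ in $Q_T$. Then $$\max_{(t,x)\in\overline{Q_T}}|u(t,x)-v(t,x)|\le\max_{x\in\mathbb{T}^d}|u(0,x)-v(0,x)|.$$ Moreover, if $u$ and $v$ are viscosity solutions of this equation with $u(0,\cdot)=v(0,\cdot)=u_0$ on $\mathbb{T}^d$, then $u\equiv v$ on $\overline{Q_T}$.
   Context: Fix $d\ge1$, $T>0$, $\alpha\in(0,1)$. $\mathbb{T}^d=\mathbb{R}^d/\mathbb{Z}^d$; functions on $[0,T]\times\mathbb{T}^d$ are identified with functions on $[0,T]\times\mathbb{R}^d$ $\mathbb{Z}^d$-periodic in $x$. $Q_T=(0,T]\times\mathbb{T}^d$, $\overline{Q_T}=[0,T]\times\mathbb{T}^d$; $D$ spatial gradient; $\partial_t^\alpha$ Caputo's derivative $(\partial_t^\alpha f)(t)=\frac{1}{\Gamma(1-\alpha)}\int_0^t f'(s)(t-s)^{-\alpha}ds$. $H:\overline{Q_T}\times\mathbb{R}\times\mathbb{R}^d\to\mathbb{R}$, $u_0:\mathbb{T}^d\to\mathbb{R}$. Assumptions: (A1) $H$ continuous. (A2) there is a modulus $\omega$ with $|H(t,x,r,p)-H(t,y,r,p)|\le\omega(|x-y|(1+|p|))$ for all $t\in[0,T]$, $x,y\in\mathbb{R}^d$, $r\in\mathbb{R}$, $p\in\mathbb{R}^d$. (A3) $r\mapsto H(t,x,r,p)$ nondecreasing. (A4) $u_0$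 continuous. $\mathcal{C}^1([a,b]\times O)=\{\phi\in C^1((a,b]\times O)\cap C([a,b]\times O):\partial_t\phi(\cdot,x)\in L^1(a,b)\ \forall x\in O\}$. For measurable $f(t,x)$, $t\in(0,T]$, $r\in[0,t]$: $J_r[f](t,x)=\frac{\alpha}{\Gamma(1-\alpha)}\int_0^r (f(t,x)-f(t-\tau,x))\tau^{-\alpha-1}d\tau$, $K_r[f](t,x)=\frac{f(t,x)-f(0,x)}{t^\alpha\Gamma(1-\alpha)}+\frac{\alpha}{\Gamma(1-\alpha)}\int_r^t (f(t,x)-f(t-\tau,x))\tau^{-\alpha-1}d\tau$ (improper at lower limit $0$). Viscosity sub/supersolution: $u\in USC(\overline{Q_T})$ (resp. $LSC$) such that for all $a<b$ in $[0,T]$, every open ball $B$, every $\phi\in\mathcal{C}^1([0,T]\times\mathbb{R}^d)$ and every $(\hat t,\hat x)\in(a,b]\times B$ where $u-\phi$ attains its maximum (resp. minimum) over $[a,b]\times\overline B$: $J_{\hat t-a}[\phi](\hat t,\hat x)+K_{\hat t-a}[u](\hat t,\hat x)+H(\hat t,\hat x,u(\hat t,\hat x),D\phi(\hat t,\hat x))\le0$ (resp. $\ge0$). Viscosity solution: $u\in C(\overline{Q_T})$ that is both. *)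

theory Defs
  imports "HOL-Analysis.Analysis"
begin

text \<open>Points of R^d are vectors of type real^'d; a function on [0,T] x T^d is
  a function real => real^'d => real which is Z^d-periodic in the space variable.\<close>

definition int_vec :: "real ^ 'd \<Rightarrow> bool" where
  "int_vec k \<longleftrightarrow> (\<forall>i. k $ i \<in> \<int>)"

definition periodic_x :: "(real \<Rightarrow> real ^ 'd \<Rightarrow> real) \<Rightarrow> bool" where
  "periodic_x f \<longleftrightarrow> (\<forall>t x k. int_vec k \<longrightarrow> f t (x + k) = f t x)"

definition periodic_sp :: "(real ^ 'd \<Rightarrow> real) \<Rightarrow> bool" where
  "periodic_sp g \<longleftrightarrow> (\<forall>x k. int_vec k \<longrightarrow> g (x + k) = g x)"

definition usc_on :: "'a::topological_space set \<Rightarrow> ('a \<Rightarrow> real) \<Rightarrow> bool" where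
  "usc_on S f \<longleftrightarrow> (\<forall>p\<in>S. \<forall>c. f p < c \<longrightarrow> (\<forall>\<^sub>F q in at p within S. f q < c))"

definition lsc_on :: "'a::topological_space set \<Rightarrow> ('a \<Rightarrow> real) \<Rightarrow> bool" where
  "lsc_on S f \<longleftrightarrow> (\<forall>p\<in>S. \<forall>c. c < f p \<longrightarrow> (\<forall>\<^sub>F q in at p within S. c < f q))"

definition modulus :: "(real \<Rightarrow> real) \<Rightarrow> bool" where
  "modulus \<omega> \<longleftrightarrow> \<omega> 0 = 0 \<and> (\<forall>s. 0 \<le> s \<longrightarrow> 0 \<le> \<omega> s) \<and> mono_on {0..} \<omega>
     \<and> (\<omega> \<longlongrightarrow> 0) (at_right 0)"

definition test_fun ::
  "real \<Rightarrow> (real \<Rightarrow> real ^ 'd \<Rightarrow> real) \<Rightarrow> (real \<Rightarrow> real ^ 'd \<Rightarrow> real)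
     \<Rightarrow> (real \<Rightarrow> real ^ 'd \<Rightarrow> real ^ 'd) \<Rightarrow> bool" where
  "test_fun T \<phi> \<phi>t D\<phi> \<longleftrightarrow>
     continuous_on ({0..T} \<times> UNIV) (\<lambda>(t,x). \<phi> t x) \<and>
     (\<forall>t x. t \<in> {0<..T} \<longrightarrow>
        ((\<lambda>(s,y). \<phi> s y) has_derivative (\<lambda>(h,k). h * \<phi>t t x + D\<phi> t x \<bullet> k))
          (at (t,x) within {0<..T} \<times> UNIV)) \<and>
     continuous_on ({0<..T} \<times> UNIV) (\<lambda>(t,x). \<phi>t t x) \<and>
     continuous_on ({0<..T} \<times> UNIV) (\<lambda>(t,x). D\<phi> t x) \<and>
     (\<forall>x. (\<lambda>t. \<phi>t t x) absolutely_integrable_on {0..T})"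

definition J_op :: "real \<Rightarrow> real \<Rightarrow> (real \<Rightarrow> real ^ 'd \<Rightarrow> real) \<Rightarrow> real \<Rightarrow> real ^ 'd \<Rightarrow> real" where
  "J_op \<alpha> r f t x = \<alpha> / Gamma (1 - \<alpha>) *
     integral {0..r} (\<lambda>\<tau>. (f t x - f (t - \<tau>) x) * \<tau> powr (- \<alpha> - 1))"

text \<open>K_r for r > 0 (the only case used in the definition of viscosity solution,
  since r = t - a > 0 there).\<close>
definition K_op :: "real \<Rightarrow> real \<Rightarrow> (real \<Rightarrow> real ^ 'd \<Rightarrow> real) \<Rightarrow> real \<Rightarrow> real ^ 'd \<Rightarrow> real" where
  "K_op \<alpha> r f t x = (f t x - f 0 x) / (t powr \<alpha> * Gamma (1 - \<alpha>)) +
     \<alpha> / Gamma (1 - \<alpha>) * integral {r..t} (\<lambda>\<tau>. (f t x - f (t - \<tau>) x) * \<tau> powr (- \<alpha> - 1))"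

definition visc_sub ::
  "real \<Rightarrow> real \<Rightarrow> (real \<Rightarrow> real ^ 'd \<Rightarrow> real \<Rightarrow> real ^ 'd \<Rightarrow> real)
     \<Rightarrow> (real \<Rightarrow> real ^ 'd \<Rightarrow> real) \<Rightarrow> bool" where
  "visc_sub \<alpha> T H u \<longleftrightarrow> usc_on ({0..T} \<times> UNIV) (\<lambda>(t,x). u t x) \<and> periodic_x u \<and>
     (\<forall>a b c \<rho> \<phi> \<phi>t D\<phi> th xh. 0 \<le> a \<and> a < b \<and> b \<le> T \<and> test_fun T \<phi> \<phi>t D\<phi> \<and>
        th \<in> {a<..b} \<and> xh \<in> ball c \<rho> \<and>
        (\<forall>s y. s \<in> {a..b} \<and> y \<in> closure (ball c \<rho>) \<longrightarrow> u s y - \<phi> s y \<le> u th xh - \<phi> th xh)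
      \<longrightarrow> J_op \<alpha> (th - a) \<phi> th xh + K_op \<alpha> (th - a) u th xh + H th xh (u th xh) (D\<phi> th xh) \<le> 0)"

definition visc_super ::
  "real \<Rightarrow> real \<Rightarrow> (real \<Rightarrow> real ^ 'd \<Rightarrow> real \<Rightarrow> real ^ 'd \<Rightarrow> real)
     \<Rightarrow> (real \<Rightarrow> real ^ 'd \<Rightarrow> real) \<Rightarrow> bool" where
  "visc_super \<alpha> T H u \<longleftrightarrow> lsc_on ({0..T} \<times> UNIV) (\<lambda>(t,x). u t x) \<and> periodic_x u \<and>
     (\<forall>a b c \<rho> \<phi> \<phi>t D\<phi> th xh. 0 \<le> a \<and> a < b \<and> b \<le> T \<and> test_fun T \<phi> \<phi>t D\<phi> \<and>
        th \<in> {a<..b} \<and> xh \<in> ball c \<rho> \<and>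
        (\<forall>s y. s \<in> {a..b} \<and> y \<in> closure (ball c \<rho>) \<longrightarrow> u th xh - \<phi> th xh \<le> u s y - \<phi> s y)
      \<longrightarrow> J_op \<alpha> (th - a) \<phi> th xh + K_op \<alpha> (th - a) u th xh + H th xh (u th xh) (D\<phi> th xh) \<ge> 0)"

definition visc_sol ::
  "real \<Rightarrow> real \<Rightarrow> (real \<Rightarrow> real ^ 'd \<Rightarrow> real \<Rightarrow> real ^ 'd \<Rightarrow> real)
     \<Rightarrow> (real \<Rightarrow> real ^ 'd \<Rightarrow> real) \<Rightarrow> bool" where
  "visc_sol \<alpha> T H u \<longleftrightarrow> continuous_on ({0..T} \<times> UNIV) (\<lambda>(t,x). u t x) \<and>
     visc_sub \<alpha> T H u \<and> visc_super \<alpha> T H u"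

end

theory Submission
  imports Defs
begin

text \<open>
  Doubling of variables. If \<open>u - v\<close> exceeded \<open>M = sup \<bar>u(0,\<cdot>) - v(0,\<cdot>)\<bar>\<close> by some \<open>\<theta> > 0\<close>, consider
  the maximum of \<open>u(t,x) - v(s,y) - \<bar>x - y\<bar>\<^sup>2/(2\<epsilon>) - (t - s)\<^sup>2/(2\<delta>)\<close>. Periodicity makes it exist;
  for small \<open>\<epsilon>, \<delta>\<close> the maximiser is close to the diagonal and, by continuity at \<open>t = 0\<close>, away
  from the initial time. There the two penalised functions are admissible test functions on a
  short time window of length \<open>r\<close>. Subtracting the resulting sub- and supersolution inequalities,
  the operators \<open>J\<^sub>r\<close> of the penalties differ by \<open>O(r/\<delta>)\<close>, the Hamiltonians differ by little
  thanks to (A2), (A3) and uniform continuity, whereas maximality compares the histories of \<open>u\<close>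
  and \<open>v\<close> and forces the memory terms \<open>K\<^sub>r\<close> to differ by about \<open>\<theta>/T\<^sup>\<alpha>\<close>. Uniqueness is the case
  \<open>M = 0\<close>.
\<close>

section \<open>Boundedness and uniform continuity\<close>

lemma int_vec_shift_into_unit_cube:
  fixes x :: "real ^ 'd"
  obtains k where "int_vec k" "x + k \<in> cbox 0 1"
proof
  define k :: "real ^ 'd" where "k = (\<chi> i. - of_int \<lfloor>x $ i\<rfloor>)"
  show "int_vec k" unfolding int_vec_def k_def by simp
  have "(x + k) $ i = frac (x $ i)" for i by (simp add: k_def frac_def)
  then show "x + k \<in> cbox 0 1"
    unfolding mem_box_cart by (simp add: frac_ge_0 less_imp_le[OF frac_lt_1])
qed

lemma periodic_x_bounded:
  fixes u :: "real \<Rightarrow> real ^ 'd \<Rightarrow> real"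
  assumes "continuous_on ({0..T} \<times> UNIV) (\<lambda>(t,x). u t x)" "periodic_x u"
  obtains R where "R > 0" "\<And>t x. t \<in> {0..T} \<Longrightarrow> \<bar>u t x\<bar> \<le> R"
proof -
  have "compact ((\<lambda>(t,x). u t x) ` ({0..T} \<times> cbox 0 1))"
    by (intro compact_continuous_image continuous_on_subset[OF assms(1)] compact_Times) auto
  then obtain R where R: "R > 0" "\<And>y. y \<in> (\<lambda>(t,x). u t x) ` ({0..T} \<times> cbox 0 1) \<Longrightarrow> \<bar>y\<bar> \<le> R"
    by (metis compact_imp_bounded bounded_pos real_norm_def)
  show ?thesis
  proof (rule that[OF R(1)])
    fix t and x :: "real ^ 'd" assume "t \<in> {0..T}"
    moreover obtain k where "int_vec k" "x + k \<in> cbox 0 1" by (rule int_vec_shift_into_unit_cube)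
    ultimately have "u t (x + k) \<in> (\<lambda>(t,x). u t x) ` ({0..T} \<times> cbox 0 1)" by force
    then show "\<bar>u t x\<bar> \<le> R"
      using R(2) assms(2) \<open>int_vec k\<close> unfolding periodic_x_def by metis
  qed
qed

lemma periodic_x_bounded_pair:
  fixes u v :: "real \<Rightarrow> real ^ 'd \<Rightarrow> real"
  assumes "continuous_on ({0..T} \<times> UNIV) (\<lambda>(t,x). u t x)" "periodic_x u"
    and "continuous_on ({0..T} \<times> UNIV) (\<lambda>(t,x). v t x)" "periodic_x v"
  obtains R where "R > 0" "\<And>t x. t \<in> {0..T} \<Longrightarrow> \<bar>u t x\<bar> \<le> R" "\<And>t x. t \<in> {0..T} \<Longrightarrow> \<bar>v t x\<bar> \<le> R"
proof -
  obtain Ru where Ru: "Ru > 0" "\<And>t x. t \<in> {0..T} \<Longrightarrow> \<bar>u t x\<bar> \<le> Ru"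
    using periodic_x_bounded[OF assms(1,2)] by blast
  obtain Rv where Rv: "\<And>t x. t \<in> {0..T} \<Longrightarrow> \<bar>v t x\<bar> \<le> Rv"
    using periodic_x_bounded[OF assms(3,4)] by blast
  show ?thesis
  proof (rule that[of "max Ru Rv"])
    show "max Ru Rv > 0" using Ru(1) by simp
    show "\<bar>u t x\<bar> \<le> max Ru Rv" "\<bar>v t x\<bar> \<le> max Ru Rv" if "t \<in> {0..T}" for t x
      using Ru(2)[OF that, of x] Rv[OF that, of x] by auto
  qed
qed

lemma periodic_x_uniformly_continuous:
  fixes u :: "real \<Rightarrow> real ^ 'd \<Rightarrow> real"
  assumes "continuous_on ({0..T} \<times> UNIV) (\<lambda>(t,x). u t x)" "periodic_x u" "0 < e"
  obtains d where "0 < d" "\<And>t s x y. t \<in> {0..T} \<Longrightarrow> s \<in> {0..T} \<Longrightarrow> \<bar>t - s\<bar> < d \<Longrightarrow> dist x y < d \<Longrightarrow>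
    \<bar>u t x - u s y\<bar> < e"
proof -
  define C :: "(real \<times> (real ^ 'd)) set" where "C = {0..T} \<times> cbox (- 1) 2"
  have "uniformly_continuous_on C (\<lambda>(t,x). u t x)"
    unfolding C_def by (intro compact_uniformly_continuous continuous_on_subset[OF assms(1)] compact_Times) auto
  then obtain d where "0 < d" and d: "\<And>p q. p \<in> C \<Longrightarrow> q \<in> C \<Longrightarrow> dist q p < d \<Longrightarrow>
      dist ((\<lambda>(t,x). u t x) q) ((\<lambda>(t,x). u t x) p) < e"
    using \<open>0 < e\<close> by (rule uniformly_continuous_onE) blast
  show ?thesis
  proof (rule that[of "min (d / 2) 1"])
    fix t s and x y :: "real ^ 'd"
    assume ts: "t \<in> {0..T}" "s \<in> {0..T}" "\<bar>t - s\<bar> < min (d / 2) 1" and xy: "dist x y < min (d / 2) 1"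
    obtain k where k: "int_vec k" "x + k \<in> cbox 0 1" by (rule int_vec_shift_into_unit_cube)
    \<comment> \<open>Shifting both points by the same integer vector moves them into a fixed compact box.\<close>
    have "x + k \<in> cbox (- 1) 2 \<and> y + k \<in> cbox (- 1) 2"
      unfolding mem_box_cart
    proof (intro conjI allI)
      fix i
      have "\<bar>y $ i - x $ i\<bar> < 1"
        using xy component_le_norm_cart[of "y - x" i] by (simp add: dist_norm norm_minus_commute)
      moreover have "0 \<le> (x + k) $ i" "(x + k) $ i \<le> 1"
        using k(2) unfolding mem_box_cart by (metis one_index zero_index)+
      ultimately show "(- 1) $ i \<le> (x + k) $ i" "(x + k) $ i \<le> 2 $ i"
        "(- 1) $ i \<le> (y + k) $ i" "(y + k) $ i \<le> 2 $ i" by (simp_all add: abs_less_iff)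
    qed
    moreover have "dist (t, x + k) (s, y + k) < d"
      using sqrt_sum_squares_le_sum_abs[of "dist t s" "dist x y"] ts(3) xy
      by (simp add: dist_Pair_Pair dist_real_def)
    ultimately have "\<bar>u t (x + k) - u s (y + k)\<bar> < e"
      using d[of "(s, y + k)" "(t, x + k)"] ts unfolding C_def by (simp add: dist_real_def)
    then show "\<bar>u t x - u s y\<bar> < e"
      using assms(2) k(1) unfolding periodic_x_def by simp
  qed (use \<open>0 < d\<close> in simp)
qed

lemma continuous_on_uniform_in_time:
  fixes H :: "real \<Rightarrow> 'a::euclidean_space \<Rightarrow> real \<Rightarrow> 'b::euclidean_space \<Rightarrow> real"
  assumes "continuous_on ({0..T} \<times> UNIV \<times> UNIV \<times> UNIV) (\<lambda>(t,x,r,p). H t x r p)" "0 < e"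
  obtains d where "0 < d" "\<And>t s x r p. t \<in> {0..T} \<Longrightarrow> s \<in> {0..T} \<Longrightarrow> norm x \<le> Lx \<Longrightarrow> \<bar>r\<bar> \<le> Lr \<Longrightarrow>
    norm p \<le> Lp \<Longrightarrow> \<bar>t - s\<bar> < d \<Longrightarrow> \<bar>H t x r p - H s x r p\<bar> < e"
proof -
  define K :: "(real \<times> 'a \<times> real \<times> 'b) set" where "K = {0..T} \<times> cball 0 Lx \<times> cball 0 Lr \<times> cball 0 Lp"
  have "uniformly_continuous_on K (\<lambda>(t,x,r,p). H t x r p)"
    unfolding K_def by (intro compact_uniformly_continuous continuous_on_subset[OF assms(1)] compact_Times) auto
  then obtain d where "0 < d" and d: "\<And>q q'. q \<in> K \<Longrightarrow> q' \<in> K \<Longrightarrow> dist q' q < d \<Longrightarrow>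
      dist ((\<lambda>(t,x,r,p). H t x r p) q') ((\<lambda>(t,x,r,p). H t x r p) q) < e"
    using \<open>0 < e\<close> by (rule uniformly_continuous_onE) blast
  show ?thesis
  proof (rule that[OF \<open>0 < d\<close>])
    fix t s r :: real and x :: 'a and p :: 'b
    assume "t \<in> {0..T}" "s \<in> {0..T}" "norm x \<le> Lx" "\<bar>r\<bar> \<le> Lr" "norm p \<le> Lp" "\<bar>t - s\<bar> < d"
    then show "\<bar>H t x r p - H s x r p\<bar> < e"
      using d[of "(s, x, r, p)" "(t, x, r, p)"] unfolding K_def by (simp add: dist_Pair_Pair dist_real_def)
  qed
qed

lemma modulus_small:
  assumes "modulus \<omega>" "e > 0"
  obtains \<sigma> where "\<sigma> > 0" "\<And>s. 0 \<le> s \<Longrightarrow> s < \<sigma> \<Longrightarrow> \<omega> s < e"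
proof -
  have "\<forall>\<^sub>F s in at_right 0. \<omega> s < e"
    using assms unfolding modulus_def by (blast intro: order_tendstoD(2))
  then obtain \<sigma> where "\<sigma> > 0" "\<And>s. 0 < s \<Longrightarrow> s < \<sigma> \<Longrightarrow> \<omega> s < e"
    unfolding eventually_at_right_field by auto
  moreover have "\<omega> 0 < e" using assms unfolding modulus_def by simp
  ultimately show ?thesis by (metis that order_le_less)
qed

section \<open>Quadratic test functions and the nonlocal operators\<close>

lemma test_fun_quadratic:
  fixes x0 :: "real ^ 'd"
  shows "test_fun T (\<lambda>t x. C + A * (t - t0)\<^sup>2 + B * ((x - x0) \<bullet> (x - x0)))
           (\<lambda>t x. 2 * A * (t - t0)) (\<lambda>t x. (2 * B) *\<^sub>R (x - x0))"
  unfolding test_fun_def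
proof (intro conjI allI impI)
  show "continuous_on ({0..T} \<times> UNIV) (\<lambda>(t, x::real^'d). C + A * (t - t0)\<^sup>2 + B * ((x - x0) \<bullet> (x - x0)))"
    unfolding case_prod_unfold by (intro continuous_intros)
  fix t and x :: "real^'d"
  assume "t \<in> {0<..T}"
  show "((\<lambda>(s, y). C + A * (s - t0)\<^sup>2 + B * ((y - x0) \<bullet> (y - x0))) has_derivative
        (\<lambda>(h, k). h * (2 * A * (t - t0)) + (2 * B) *\<^sub>R (x - x0) \<bullet> k)) (at (t, x) within {0<..T} \<times> UNIV)"
  proof -
    have "((\<lambda>p. C + A * (fst p - t0)\<^sup>2 + B * ((snd p - x0) \<bullet> (snd p - x0))) has_derivative
        (\<lambda>p. 0 + A * (2 * (fst (t,x) - t0) * fst p) + B * ((snd p) \<bullet> (x - x0) + (x - x0) \<bullet> snd p))) (at (t, x) within {0<..T} \<times> UNIV)"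
      by (intro derivative_eq_intros) auto
    then show ?thesis unfolding case_prod_unfold
      by (rule has_derivative_eq_rhs) (auto simp: fun_eq_iff inner_commute algebra_simps)
  qed
next
  show "continuous_on ({0<..T} \<times> UNIV) (\<lambda>(t, x::real^'d). 2 * A * (t - t0))"
    unfolding case_prod_unfold by (intro continuous_intros)
  show "continuous_on ({0<..T} \<times> UNIV) (\<lambda>(t, x::real^'d). (2 * B) *\<^sub>R (x - x0))"
    unfolding case_prod_unfold by (intro continuous_intros)
  fix x :: "real^'d"
  show "(\<lambda>t. 2 * A * (t - t0)) absolutely_integrable_on {0..T}"
    by (intro absolutely_integrable_continuous_real continuous_intros)
qed

lemma J_op_quadratic:
  fixes x0 :: "real ^ 'd" and A B C t0 :: real
  assumes "0 < \<alpha>" "\<alpha> < 1" "0 \<le> r"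
  defines "q \<equiv> \<lambda>t x. C + A * (t - t0)\<^sup>2 + B * ((x - x0) \<bullet> (x - x0))"
  shows "J_op \<alpha> r q t x =
    \<alpha> / Gamma (1 - \<alpha>) * (2 * A * (t - t0) * integral {0..r} (\<lambda>\<tau>. \<tau> powr (- \<alpha>))
       - A * integral {0..r} (\<lambda>\<tau>. \<tau> powr (1 - \<alpha>)))"
proof -
  have integrand: "(q t x - q (t - \<tau>) x) * \<tau> powr (- \<alpha> - 1)
      = 2 * A * (t - t0) * \<tau> powr (- \<alpha>) - A * \<tau> powr (1 - \<alpha>)" if "\<tau> \<in> {0..r}" for \<tau>
  proof (cases "\<tau> = 0")
    case False
    with that have \<tau>_powr: "\<tau> * \<tau> powr (- \<alpha> - 1) = \<tau> powr (- \<alpha>)" "\<tau> * \<tau> powr (- \<alpha>) = \<tau> powr (1 - \<alpha>)"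
      using powr_mult_base[of \<tau>] by auto
    have "(q t x - q (t - \<tau>) x) * \<tau> powr (- \<alpha> - 1) = (2 * A * (t - t0) - A * \<tau>) * (\<tau> * \<tau> powr (- \<alpha> - 1))"
      unfolding q_def by (simp add: power2_eq_square algebra_simps)
    also have "\<dots> = 2 * A * (t - t0) * \<tau> powr (- \<alpha>) - A * (\<tau> * \<tau> powr (- \<alpha>))"
      unfolding \<tau>_powr(1) by (simp add: algebra_simps)
    finally show ?thesis unfolding \<tau>_powr(2) .
  qed (simp add: q_def)
  have i0: "(\<lambda>\<tau>. \<tau> powr (- \<alpha>)) integrable_on {0..r}" and i1: "(\<lambda>\<tau>. \<tau> powr (1 - \<alpha>)) integrable_on {0..r}"
    using assms by (intro integrable_on_powr_from_0; simp)+
  have "integral {0..r} (\<lambda>\<tau>. (q t x - q (t - \<tau>) x) * \<tau> powr (- \<alpha> - 1))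
      = integral {0..r} (\<lambda>\<tau>. 2 * A * (t - t0) * \<tau> powr (- \<alpha>) - A * \<tau> powr (1 - \<alpha>))"
    by (rule integral_cong) (rule integrand)
  also have "\<dots> = 2 * A * (t - t0) * integral {0..r} (\<lambda>\<tau>. \<tau> powr (- \<alpha>))
      - A * integral {0..r} (\<lambda>\<tau>. \<tau> powr (1 - \<alpha>))"
    using integral_diff[OF integrable_on_cmult_left[OF i0, of "2 * A * (t - t0)"] integrable_on_cmult_left[OF i1, of A]]
    by simp
  finally show ?thesis unfolding J_op_def by simp
qed

lemma J_op_penalty_difference:
  fixes x0 y0 :: "real ^ 'd"
  assumes "0 < \<alpha>" "\<alpha> < 1" "0 < r" "r \<le> 1" "0 < \<delta>"
  shows "J_op \<alpha> r (\<lambda>t y. C' + - 1 / (2 * \<delta>) * (t - t1)\<^sup>2 + B' * ((y - x0) \<bullet> (y - x0))) s y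
       - J_op \<alpha> r (\<lambda>t x. C + 1 / (2 * \<delta>) * (t - s)\<^sup>2 + B * ((x - y0) \<bullet> (x - y0))) t1 x
     \<le> \<alpha> * r / (Gamma (1 - \<alpha>) * \<delta>)"
proof -
  have G: "0 < Gamma (1 - \<alpha>)" using assms(2) by simp
  define I where "I = integral {0..r} (\<lambda>\<tau>. \<tau> powr (1 - \<alpha>))"
  \<comment> \<open>The first order parts cancel; only the curvature of the time penalty survives.\<close>
  have "J_op \<alpha> r (\<lambda>t y. C' + - 1 / (2 * \<delta>) * (t - t1)\<^sup>2 + B' * ((y - x0) \<bullet> (y - x0))) s y
      - J_op \<alpha> r (\<lambda>t x. C + 1 / (2 * \<delta>) * (t - s)\<^sup>2 + B * ((x - y0) \<bullet> (x - y0))) t1 x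
      = \<alpha> * I / (Gamma (1 - \<alpha>) * \<delta>)"
    unfolding J_op_quadratic[OF assms(1,2) less_imp_le[OF assms(3)]] I_def using assms(5) G
    by (simp add: field_simps)
  moreover have "I \<le> integral {0..r} (\<lambda>\<tau>. 1)" unfolding I_def
    using assms(1-4) by (intro integral_le integrable_on_powr_from_0 powr_le1) auto
  ultimately show ?thesis using assms(1,3,5) G by (simp add: frac_le mult_left_mono)
qed

lemma powr_neg_lipschitz:
  fixes a s t \<alpha> :: real
  assumes "0 < a" "a \<le> s" "a \<le> t" "0 < \<alpha>"
  shows "\<bar>t powr - \<alpha> - s powr - \<alpha>\<bar> \<le> \<alpha> * a powr (- \<alpha> - 1) * \<bar>t - s\<bar>"
proof -
  have main: "\<bar>y powr - \<alpha> - x powr - \<alpha>\<bar> \<le> \<alpha> * a powr (- \<alpha> - 1) * (y - x)"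
    if "a \<le> x" "x < y" for x y
  proof -
    have deriv: "((\<lambda>z. z powr - \<alpha>) has_real_derivative - \<alpha> * z powr (- \<alpha> - 1)) (at z)" if "x \<le> z" for z
      using that \<open>a \<le> x\<close> assms(1) by (auto intro!: derivative_eq_intros simp: powr_diff)
    then obtain z where z: "x < z" "y powr - \<alpha> - x powr - \<alpha> = (y - x) * (- \<alpha> * z powr (- \<alpha> - 1))"
      using MVT2[OF \<open>x < y\<close> deriv] by blast
    have "z powr (- \<alpha> - 1) \<le> a powr (- \<alpha> - 1)"
      using z(1) that assms by (intro powr_mono2') auto
    then show ?thesis
      using z(2) that assms by (simp add: abs_mult mult_left_mono mult_right_mono)
  qed
  show ?thesis
    using main[of s t] main[of t s] assms by (cases s t rule: linorder_cases) (auto simp: abs_minus_commute)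
qed

lemma memory_integral_difference_ge:
  fixes f g :: "real \<Rightarrow> real"
  assumes "0 < \<alpha>" "0 < r" "r \<le> \<tau>0" "\<tau>0 \<le> t" "\<tau>0 \<le> s" "t \<le> T" "s \<le> T"
    and cont: "continuous_on {0..T} f" "continuous_on {0..T} g"
    and bound: "\<And>\<tau>. \<tau> \<in> {0..T} \<Longrightarrow> \<bar>f \<tau>\<bar> \<le> R" "\<And>\<tau>. \<tau> \<in> {0..T} \<Longrightarrow> \<bar>g \<tau>\<bar> \<le> R"
    and incr: "\<And>\<tau>. r \<le> \<tau> \<Longrightarrow> \<tau> \<le> min t s \<Longrightarrow> g s - g (s - \<tau>) \<le> f t - f (t - \<tau>)"
  shows "- (2 * R * \<tau>0 powr (- \<alpha> - 1) * \<bar>t - s\<bar>)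
    \<le> integral {r..t} (\<lambda>\<tau>. (f t - f (t - \<tau>)) * \<tau> powr (- \<alpha> - 1))
      - integral {r..s} (\<lambda>\<tau>. (g s - g (s - \<tau>)) * \<tau> powr (- \<alpha> - 1))"
proof -
  have "0 \<le> R" using bound(1)[of t] assms(2-4,6) by force
  \<comment> \<open>Up to \<open>min t s\<close> the integrands are ordered; on the remaining pieces of length at most
    \<open>\<bar>t - s\<bar>\<close> the kernel is bounded because \<open>\<tau> \<ge> \<tau>0\<close>.\<close>
  define B where "B = 2 * R * \<tau>0 powr (- \<alpha> - 1)"
  define m where "m = min t s"
  have split: "integral {r..e} W = integral {r..m} W + integral {m..e} W
      \<and> \<bar>integral {m..e} W\<bar> \<le> B * (e - m) \<and> W integrable_on {r..m}"
    if W: "W = (\<lambda>\<tau>. (h e - h (e - \<tau>)) * \<tau> powr (- \<alpha> - 1))" and h: "continuous_on {0..T} h"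
      "\<And>\<tau>. \<tau> \<in> {0..T} \<Longrightarrow> \<bar>h \<tau>\<bar> \<le> R" and e: "m \<le> e" "e \<le> T" for h e W
  proof -
    have "r \<le> m" "\<tau>0 \<le> m" using assms(3-5) unfolding m_def by auto
    have "continuous_on {r..e} (\<lambda>\<tau>. h (e - \<tau>))"
      by (rule continuous_on_compose2[OF h(1)]) (use e \<open>r \<le> m\<close> assms(2) in \<open>auto intro!: continuous_intros\<close>)
    then have "continuous_on {r..e} W"
      unfolding W using assms(2) by (intro continuous_intros) auto
    then have int: "W integrable_on {r..e}" by (rule integrable_continuous_interval)
    have "\<bar>W \<tau>\<bar> \<le> B" if "\<tau> \<in> {m..e}" for \<tau>
    proof -
      have "e \<in> {0..T}" "e - \<tau> \<in> {0..T}" using that e \<open>r \<le> m\<close> assms(2) by auto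
      then have "\<bar>h e - h (e - \<tau>)\<bar> \<le> 2 * R"
        using h(2) abs_triangle_ineq4[of "h e" "h (e - \<tau>)"] by (smt (verit))
      moreover have "\<tau> powr (- \<alpha> - 1) \<le> \<tau>0 powr (- \<alpha> - 1)"
        using that \<open>\<tau>0 \<le> m\<close> assms(1-3) by (intro powr_mono2') auto
      ultimately show ?thesis
        unfolding W B_def abs_mult by (intro mult_mono) auto
    qed
    moreover have "W integrable_on {m..e}"
      by (rule integrable_subinterval_real[OF int]) (use \<open>r \<le> m\<close> in auto)
    ultimately have "norm (integral {m..e} W) \<le> B * Henstock_Kurzweil_Integration.content {m..e}"
      using \<open>0 \<le> R\<close> by (intro has_integral_bound_real[OF _ finite.emptyI integrable_integral]) (auto simp: B_def)
    then have "\<bar>integral {m..e} W\<bar> \<le> B * (e - m)" using e(1) by simp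
    then show ?thesis
      using Henstock_Kurzweil_Integration.integral_combine[OF \<open>r \<le> m\<close> e(1) int]
        integrable_subinterval_real[OF int, of r m] e by auto
  qed
  define U where "U = (\<lambda>\<tau>. (f t - f (t - \<tau>)) * \<tau> powr (- \<alpha> - 1))"
  define V where "V = (\<lambda>\<tau>. (g s - g (s - \<tau>)) * \<tau> powr (- \<alpha> - 1))"
  have "m \<le> t" "m \<le> s" "(t - m) + (s - m) = \<bar>t - s\<bar>" unfolding m_def by auto
  have U: "integral {r..t} U = integral {r..m} U + integral {m..t} U"
      "\<bar>integral {m..t} U\<bar> \<le> B * (t - m)" "U integrable_on {r..m}"
    using split[OF U_def cont(1) bound(1) \<open>m \<le> t\<close> \<open>t \<le> T\<close>] by auto
  have V: "integral {r..s} V = integral {r..m} V + integral {m..s} V"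
      "\<bar>integral {m..s} V\<bar> \<le> B * (s - m)" "V integrable_on {r..m}"
    using split[OF V_def cont(2) bound(2) \<open>m \<le> s\<close> \<open>s \<le> T\<close>] by auto
  have "integral {r..m} V \<le> integral {r..m} U"
    using U(3) V(3) incr unfolding U_def V_def by (intro integral_le mult_right_mono) (auto simp: m_def)
  moreover have "B * (t - m) + B * (s - m) = B * \<bar>t - s\<bar>"
    unfolding distrib_left[symmetric] \<open>(t - m) + (s - m) = \<bar>t - s\<bar>\<close> ..
  ultimately show ?thesis
    using U(1,2) V(1,2) unfolding U_def[symmetric] V_def[symmetric] B_def[symmetric] abs_le_iff by linarith
qed

lemma K_op_difference_ge:
  fixes f g :: "real \<Rightarrow> real ^ 'd \<Rightarrow> real"
  assumes "0 < \<alpha>" "\<alpha> < 1" "0 < r" "r \<le> \<tau>0" "\<tau>0 \<le> t" "\<tau>0 \<le> s" "t \<le> T" "s \<le> T"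
    and cont: "continuous_on {0..T} (\<lambda>\<tau>. f \<tau> x)" "continuous_on {0..T} (\<lambda>\<tau>. g \<tau> y)"
    and bound: "\<And>\<tau>. \<tau> \<in> {0..T} \<Longrightarrow> \<bar>f \<tau> x\<bar> \<le> R" "\<And>\<tau>. \<tau> \<in> {0..T} \<Longrightarrow> \<bar>g \<tau> y\<bar> \<le> R"
    and incr: "\<And>\<tau>. r \<le> \<tau> \<Longrightarrow> \<tau> \<le> min t s \<Longrightarrow> g s y - g (s - \<tau>) y \<le> f t x - f (t - \<tau>) x"
  shows "(f t x - f 0 x - (g s y - g 0 y)) / t powr \<alpha> - 4 * \<alpha> * R * \<tau>0 powr (- \<alpha> - 1) * \<bar>t - s\<bar>
    \<le> Gamma (1 - \<alpha>) * (K_op \<alpha> r f t x - K_op \<alpha> r g s y)"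
proof -
  have G: "0 < Gamma (1 - \<alpha>)" using assms(2) by simp
  have "0 < t" "0 < s" using assms(3-6) by auto
  define a where "a = f t x - f 0 x"
  define b where "b = g s y - g 0 y"
  define L where "L = \<alpha> * \<tau>0 powr (- \<alpha> - 1)"
  define If where "If = integral {r..t} (\<lambda>\<tau>. (f t x - f (t - \<tau>) x) * \<tau> powr (- \<alpha> - 1))"
  define Ig where "Ig = integral {r..s} (\<lambda>\<tau>. (g s y - g (s - \<tau>) y) * \<tau> powr (- \<alpha> - 1))"
  have "- (2 * R * \<tau>0 powr (- \<alpha> - 1) * \<bar>t - s\<bar>) \<le> If - Ig"
    unfolding If_def Ig_def
    using memory_integral_difference_ge[of \<alpha> r \<tau>0 t s T "\<lambda>\<tau>. f \<tau> x" "\<lambda>\<tau>. g \<tau> y" R,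
        OF assms(1,3-8) cont bound incr] by simp
  then have "\<alpha> * - (2 * R * \<tau>0 powr (- \<alpha> - 1) * \<bar>t - s\<bar>) \<le> \<alpha> * (If - Ig)"
    using assms(1) by (intro mult_left_mono) auto
  then have memory: "- (2 * R * L * \<bar>t - s\<bar>) \<le> \<alpha> * (If - Ig)"
    unfolding L_def by (simp add: algebra_simps)
  have "\<bar>b\<bar> \<le> 2 * R"
    using bound(2)[of s] bound(2)[of 0] abs_triangle_ineq4[of "g s y" "g 0 y"] \<open>0 < s\<close> assms(8)
    unfolding b_def by force
  moreover have "\<bar>t powr - \<alpha> - s powr - \<alpha>\<bar> \<le> L * \<bar>t - s\<bar>"
    unfolding L_def using powr_neg_lipschitz[of \<tau>0 s t \<alpha>] assms by auto
  ultimately have "\<bar>b * (t powr - \<alpha> - s powr - \<alpha>)\<bar> \<le> 2 * R * (L * \<bar>t - s\<bar>)"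
    unfolding abs_mult by (intro mult_mono) auto
  moreover have "a / t powr \<alpha> - b / s powr \<alpha> = (a - b) / t powr \<alpha> + b * (t powr - \<alpha> - s powr - \<alpha>)"
    by (simp add: powr_minus_divide diff_divide_distrib algebra_simps)
  moreover have "Gamma (1 - \<alpha>) * (K_op \<alpha> r f t x - K_op \<alpha> r g s y)
      = a / t powr \<alpha> - b / s powr \<alpha> + \<alpha> * (If - Ig)"
    unfolding K_op_def a_def b_def If_def Ig_def using G \<open>0 < t\<close> \<open>0 < s\<close> by (simp add: field_simps)
  ultimately show ?thesis
    using memory unfolding a_def[symmetric] b_def[symmetric] L_def abs_le_iff by (simp add: algebra_simps)
qed

section \<open>Doubling of variables\<close>

definition doubling ::
  "real \<Rightarrow> real \<Rightarrow> (real \<Rightarrow> 'a::real_inner \<Rightarrow> real) \<Rightarrow> (real \<Rightarrow> 'a \<Rightarrow> real)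
     \<Rightarrow> real \<Rightarrow> real \<Rightarrow> 'a \<Rightarrow> 'a \<Rightarrow> real" where
  "doubling \<epsilon> \<delta> u v t s x y = u t x - v s y - (x - y) \<bullet> (x - y) / (2 * \<epsilon>) - (t - s)\<^sup>2 / (2 * \<delta>)"

definition doubling_max ::
  "real \<Rightarrow> real \<Rightarrow> real \<Rightarrow> (real \<Rightarrow> 'a::real_inner \<Rightarrow> real) \<Rightarrow> (real \<Rightarrow> 'a \<Rightarrow> real)
     \<Rightarrow> real \<Rightarrow> real \<Rightarrow> 'a \<Rightarrow> 'a \<Rightarrow> bool" where
  "doubling_max T \<epsilon> \<delta> u v tb sb xb yb \<longleftrightarrow> tb \<in> {0..T} \<and> sb \<in> {0..T} \<and>
     (\<forall>t\<in>{0..T}. \<forall>s\<in>{0..T}. \<forall>x y. doubling \<epsilon> \<delta> u v t s x y \<le> doubling \<epsilon> \<delta> u v tb sb xb yb)"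

lemma doubling_le_difference:
  assumes "0 < \<epsilon>" "0 < \<delta>"
  shows "doubling \<epsilon> \<delta> u v t s x y \<le> u t x - v s y"
proof -
  have "0 \<le> (x - y) \<bullet> (x - y) / (2 * \<epsilon>)" "0 \<le> (t - s)\<^sup>2 / (2 * \<delta>)" using assms by simp_all
  then show ?thesis unfolding doubling_def by linarith
qed

lemma doubling_far_from_diagonal:
  assumes "0 < \<epsilon>" "0 < \<delta>" "t \<in> {0..T}" "s \<in> {0..T}" "8 * R * \<epsilon> < (x - y) \<bullet> (x - y)"
    and "\<And>t x. t \<in> {0..T} \<Longrightarrow> \<bar>u t x\<bar> \<le> R" "\<And>t x. t \<in> {0..T} \<Longrightarrow> \<bar>v t x\<bar> \<le> R"
  shows "doubling \<epsilon> \<delta> u v t s x y < - 2 * R"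
proof -
  have "4 * R < (x - y) \<bullet> (x - y) / (2 * \<epsilon>)" using assms(1,5) by (simp add: field_simps)
  moreover have "0 \<le> (t - s)\<^sup>2 / (2 * \<delta>)" using assms(2) by simp
  moreover have "u t x \<le> R" "- R \<le> v s y" using assms(6)[OF assms(3), of x] assms(7)[OF assms(4), of y] by auto
  ultimately show ?thesis unfolding doubling_def by linarith
qed

lemma doubling_max_exists:
  fixes u v :: "real \<Rightarrow> real ^ 'd \<Rightarrow> real"
  assumes "0 \<le> T" "0 < \<epsilon>" "0 < \<delta>"
    and u: "continuous_on ({0..T} \<times> UNIV) (\<lambda>(t,x). u t x)" "periodic_x u"
    and v: "continuous_on ({0..T} \<times> UNIV) (\<lambda>(t,x). v t x)" "periodic_x v"
    and uR: "\<And>t x. t \<in> {0..T} \<Longrightarrow> \<bar>u t x\<bar> \<le> R"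
    and vR: "\<And>t x. t \<in> {0..T} \<Longrightarrow> \<bar>v t x\<bar> \<le> R"
  obtains tb sb xb yb where "doubling_max T \<epsilon> \<delta> u v tb sb xb yb" "xb \<in> cbox 0 1"
proof -
  define \<rho> where "\<rho> = 8 * R * \<epsilon> + 1"
  have "0 \<le> R" using uR[of 0 0] assms(1) by simp
  then have "1 \<le> \<rho>" using assms(2) unfolding \<rho>_def by simp
  define \<Psi> where "\<Psi> = (\<lambda>(t, s, x, z). doubling \<epsilon> \<delta> u v t s x (x - z))"
  define S :: "(real \<times> real \<times> (real ^ 'd) \<times> (real ^ 'd)) set"
    where "S = {0..T} \<times> {0..T} \<times> cbox 0 1 \<times> cball 0 \<rho>"
  have "continuous_on S (\<lambda>p. u (fst p) (fst (snd (snd p))))"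
    by (rule continuous_on_compose2[OF u(1), of S "\<lambda>p. (fst p, fst (snd (snd p)))", simplified])
      (auto simp: S_def intro!: continuous_intros)
  moreover have "continuous_on S (\<lambda>p. v (fst (snd p)) (fst (snd (snd p)) - snd (snd (snd p))))"
    by (rule continuous_on_compose2[OF v(1), of S "\<lambda>p. (fst (snd p), fst (snd (snd p)) - snd (snd (snd p)))", simplified])
      (auto simp: S_def intro!: continuous_intros)
  ultimately have "continuous_on S \<Psi>"
    unfolding \<Psi>_def doubling_def case_prod_unfold using assms(2,3) by (intro continuous_intros) auto
  moreover have "compact S" unfolding S_def by (intro compact_Times) auto
  moreover have "(0, 0, 0, 0) \<in> S" using assms(1) \<open>1 \<le> \<rho>\<close> unfolding S_def by (simp add: mem_box_cart)
  ultimately obtain zb where zb: "zb \<in> S" "\<And>z. z \<in> S \<Longrightarrow> \<Psi> z \<le> \<Psi> zb"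
    using continuous_attains_sup[of S \<Psi>] by blast
  obtain tb sb xb wb where zb_eq: "zb = (tb, sb, xb, wb)" by (cases zb) auto
  have shift: "doubling \<epsilon> \<delta> u v t s (x + k) (y + k) = doubling \<epsilon> \<delta> u v t s x y" if "int_vec k" for t s x y k
    using u(2) v(2) that unfolding doubling_def periodic_x_def by simp
  \<comment> \<open>By periodicity x may be moved into the unit cube; pairs with x and y far apart lie below
    the value at the origin.\<close>
  have "doubling \<epsilon> \<delta> u v t s x y \<le> \<Psi> zb" if "t \<in> {0..T}" "s \<in> {0..T}" for t s x y
  proof (cases "norm (x - y) \<le> \<rho>")
    case True
    obtain k where k: "int_vec k" "x + k \<in> cbox 0 1" by (rule int_vec_shift_into_unit_cube)
    have "doubling \<epsilon> \<delta> u v t s x y = \<Psi> (t, s, x + k, x - y)"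
      using shift[OF k(1), of t s x y] by (simp add: \<Psi>_def add.commute)
    also have "\<dots> \<le> \<Psi> zb" using zb(2) that k(2) True by (simp add: S_def)
    finally show ?thesis .
  next
    case False
    have "8 * R * \<epsilon> < \<rho>" unfolding \<rho>_def by simp
    also have "\<rho> \<le> \<rho>\<^sup>2" using \<open>1 \<le> \<rho>\<close> by (simp add: power2_eq_square)
    also have "\<rho>\<^sup>2 < (x - y) \<bullet> (x - y)"
      using False \<open>1 \<le> \<rho>\<close> by (simp add: power2_norm_eq_inner[symmetric] power_strict_mono)
    finally have "doubling \<epsilon> \<delta> u v t s x y < - 2 * R"
      using doubling_far_from_diagonal[where u = u and v = v, OF assms(2,3) that _ uR vR] by blast
    also have "\<dots> \<le> \<Psi> (0, 0, 0, 0)"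
      using uR[of 0 0] vR[of 0 0] assms(1) by (simp add: \<Psi>_def doubling_def abs_le_iff)
    also have "\<dots> \<le> \<Psi> zb" using zb(2) assms(1) \<open>1 \<le> \<rho>\<close> by (simp add: S_def mem_box_cart)
    finally show ?thesis by simp
  qed
  moreover have "tb \<in> {0..T}" "sb \<in> {0..T}" "xb \<in> cbox 0 1" using zb(1) unfolding zb_eq S_def by auto
  ultimately show ?thesis
    using that[of tb sb xb "xb - wb"] unfolding doubling_max_def by (simp add: \<Psi>_def zb_eq)
qed

lemma doubling_max_diagonal_le:
  assumes "doubling_max T \<epsilon> \<delta> u v tb sb xb yb" "t \<in> {0..T}"
  shows "u t x - v t x \<le> doubling \<epsilon> \<delta> u v tb sb xb yb"
proof -
  have "doubling \<epsilon> \<delta> u v t t x x \<le> doubling \<epsilon> \<delta> u v tb sb xb yb"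
    using assms unfolding doubling_max_def by blast
  then show ?thesis by (simp add: doubling_def)
qed

lemma doubling_max_penalty_bound:
  assumes "doubling_max T \<epsilon> \<delta> u v tb sb xb yb" "0 < \<epsilon>" "0 < \<delta>" "0 \<le> T"
    and "\<And>t x. t \<in> {0..T} \<Longrightarrow> \<bar>u t x\<bar> \<le> R" "\<And>t x. t \<in> {0..T} \<Longrightarrow> \<bar>v t x\<bar> \<le> R"
  shows "(norm (xb - yb))\<^sup>2 \<le> 8 * R * \<epsilon>" "(tb - sb)\<^sup>2 \<le> 8 * R * \<delta>"
proof -
  have tb: "tb \<in> {0..T}" and sb: "sb \<in> {0..T}" using assms(1) unfolding doubling_max_def by auto
  have "u 0 xb - v 0 xb \<le> doubling \<epsilon> \<delta> u v tb sb xb yb"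
    using doubling_max_diagonal_le[OF assms(1)] assms(4) by simp
  moreover have "- R \<le> u 0 xb" "v 0 xb \<le> R" "u tb xb \<le> R" "- R \<le> v sb yb"
    using assms(5)[OF tb, of xb] assms(6)[OF sb, of yb] assms(5,6)[of 0 xb] assms(4) by (auto simp: abs_le_iff)
  ultimately have "(norm (xb - yb))\<^sup>2 / (2 * \<epsilon>) + (tb - sb)\<^sup>2 / (2 * \<delta>) \<le> 4 * R"
    unfolding doubling_def power2_norm_eq_inner by linarith
  moreover have "0 \<le> (norm (xb - yb))\<^sup>2 / (2 * \<epsilon>)" "0 \<le> (tb - sb)\<^sup>2 / (2 * \<delta>)" using assms(2,3) by simp_all
  ultimately have "(norm (xb - yb))\<^sup>2 / (2 * \<epsilon>) \<le> 4 * R" "(tb - sb)\<^sup>2 / (2 * \<delta>) \<le> 4 * R"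
    by linarith+
  then show "(norm (xb - yb))\<^sup>2 \<le> 8 * R * \<epsilon>" "(tb - sb)\<^sup>2 \<le> 8 * R * \<delta>"
    using assms(2,3) by (simp_all add: field_simps)
qed

lemma doubling_max_space_bound:
  assumes "doubling_max T \<epsilon> \<delta> u v tb sb xb yb" "0 < \<epsilon>"
  shows "(norm (xb - yb))\<^sup>2 / \<epsilon> \<le> 2 * (v sb xb - v sb yb)"
proof -
  have "doubling \<epsilon> \<delta> u v tb sb xb xb \<le> doubling \<epsilon> \<delta> u v tb sb xb yb"
    using assms(1) unfolding doubling_max_def by blast
  then show ?thesis using assms(2) unfolding doubling_def power2_norm_eq_inner by (simp add: field_simps)
qed

lemma doubling_max_time_increments:
  assumes "doubling_max T \<epsilon> \<delta> u v tb sb xb yb" "0 \<le> \<tau>" "\<tau> \<le> tb" "\<tau> \<le> sb"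
  shows "v sb yb - v (sb - \<tau>) yb \<le> u tb xb - u (tb - \<tau>) xb"
proof -
  have "doubling \<epsilon> \<delta> u v (tb - \<tau>) (sb - \<tau>) xb yb \<le> doubling \<epsilon> \<delta> u v tb sb xb yb"
    using assms unfolding doubling_max_def by auto
  then show ?thesis unfolding doubling_def by (simp add: algebra_simps)
qed

lemma doubling_max_viscosity_inequality:
  fixes H :: "real \<Rightarrow> real ^ 'd \<Rightarrow> real \<Rightarrow> real ^ 'd \<Rightarrow> real"
  assumes "0 < \<alpha>" "\<alpha> < 1" "0 < \<epsilon>" "0 < \<delta>"
    and sub: "visc_sub \<alpha> T H u" and super: "visc_super \<alpha> T H v"
    and max: "doubling_max T \<epsilon> \<delta> u v tb sb xb yb"
    and r: "0 < r" "r \<le> tb" "r \<le> sb" "r \<le> 1"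
  defines "p \<equiv> (1 / \<epsilon>) *\<^sub>R (xb - yb)"
  shows "Gamma (1 - \<alpha>) * (K_op \<alpha> r u tb xb - K_op \<alpha> r v sb yb
           + H tb xb (u tb xb) p - H sb yb (v sb yb) p) \<le> \<alpha> * r / \<delta>"
proof -
  have tb: "tb \<in> {0..T}" and sb: "sb \<in> {0..T}" using max unfolding doubling_max_def by auto
  \<comment> \<open>Freezing one point of the maximiser turns the penalty into a test function touching \<open>u\<close> from
    above at \<open>(tb, xb)\<close>, respectively \<open>v\<close> from below at \<open>(sb, yb)\<close>.\<close>
  define \<phi> where "\<phi> t x = v sb yb + 1 / (2 * \<delta>) * (t - sb)\<^sup>2 + 1 / (2 * \<epsilon>) * ((x - yb) \<bullet> (x - yb))"
    for t and x :: "real ^ 'd"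
  define \<psi> where "\<psi> t y = u tb xb + - 1 / (2 * \<delta>) * (t - tb)\<^sup>2 + - 1 / (2 * \<epsilon>) * ((y - xb) \<bullet> (y - xb))"
    for t and y :: "real ^ 'd"
  have D\<phi>: "(2 * (1 / (2 * \<epsilon>))) *\<^sub>R (xb - yb) = p" and D\<psi>: "(2 * (- 1 / (2 * \<epsilon>))) *\<^sub>R (yb - xb) = p"
    unfolding p_def by (simp_all add: scaleR_diff_right)
  note sub_test = sub[unfolded visc_sub_def, THEN conjunct2, THEN conjunct2, rule_format]
  have sub_ineq: "J_op \<alpha> (tb - (tb - r)) \<phi> tb xb + K_op \<alpha> (tb - (tb - r)) u tb xb
      + H tb xb (u tb xb) ((2 * (1 / (2 * \<epsilon>))) *\<^sub>R (xb - yb)) \<le> 0"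
  proof (rule sub_test[where a = "tb - r" and b = tb and c = xb and \<rho> = 1 and \<phi> = \<phi> and th = tb and xh = xb],
      intro conjI allI impI)
    show "test_fun T \<phi> (\<lambda>t x. 2 * (1 / (2 * \<delta>)) * (t - sb)) (\<lambda>t x. (2 * (1 / (2 * \<epsilon>))) *\<^sub>R (x - yb))"
      unfolding \<phi>_def[abs_def] by (rule test_fun_quadratic)
    fix t y assume "t \<in> {tb - r..tb} \<and> y \<in> closure (ball xb 1)"
    then have "doubling \<epsilon> \<delta> u v t sb y yb \<le> doubling \<epsilon> \<delta> u v tb sb xb yb"
      using max r tb sb unfolding doubling_max_def by auto
    then show "u t y - \<phi> t y \<le> u tb xb - \<phi> tb xb" unfolding \<phi>_def doubling_def by simp
  qed (use r tb in auto)
  note super_test = super[unfolded visc_super_def, THEN conjunct2, THEN conjunct2, rule_format]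
  have super_ineq: "0 \<le> J_op \<alpha> (sb - (sb - r)) \<psi> sb yb + K_op \<alpha> (sb - (sb - r)) v sb yb
      + H sb yb (v sb yb) ((2 * (- 1 / (2 * \<epsilon>))) *\<^sub>R (yb - xb))"
  proof (rule super_test[where a = "sb - r" and b = sb and c = yb and \<rho> = 1 and \<phi> = \<psi> and th = sb and xh = yb],
      intro conjI allI impI)
    show "test_fun T \<psi> (\<lambda>t y. 2 * (- 1 / (2 * \<delta>)) * (t - tb)) (\<lambda>t y. (2 * (- 1 / (2 * \<epsilon>))) *\<^sub>R (y - xb))"
      unfolding \<psi>_def[abs_def] by (rule test_fun_quadratic)
    fix t y assume "t \<in> {sb - r..sb} \<and> y \<in> closure (ball yb 1)"
    then have "doubling \<epsilon> \<delta> u v tb t xb y \<le> doubling \<epsilon> \<delta> u v tb sb xb yb"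
      using max r tb sb unfolding doubling_max_def by auto
    moreover have "v s z - \<psi> s z = - doubling \<epsilon> \<delta> u v tb s xb z" for s z
      unfolding \<psi>_def doubling_def
      by (simp add: power2_commute flip: power2_norm_eq_inner) (simp add: norm_minus_commute)
    ultimately show "v sb yb - \<psi> sb yb \<le> v t y - \<psi> t y" by simp
  qed (use r sb in auto)
  have J_diff: "J_op \<alpha> r \<psi> sb yb - J_op \<alpha> r \<phi> tb xb \<le> \<alpha> * r / (Gamma (1 - \<alpha>) * \<delta>)"
    unfolding \<phi>_def[abs_def] \<psi>_def[abs_def] by (rule J_op_penalty_difference) (use assms r in auto)
  have "K_op \<alpha> r u tb xb - K_op \<alpha> r v sb yb + H tb xb (u tb xb) p - H sb yb (v sb yb) p
      \<le> \<alpha> * r / (Gamma (1 - \<alpha>) * \<delta>)"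
    using sub_ineq super_ineq J_diff unfolding D\<phi> D\<psi> by simp
  moreover have "0 < Gamma (1 - \<alpha>)" using assms(2) by simp
  ultimately show ?thesis using assms(4) by (simp add: field_simps)
qed

lemma doubling_max_key_estimate:
  fixes H :: "real \<Rightarrow> real ^ 'd \<Rightarrow> real \<Rightarrow> real ^ 'd \<Rightarrow> real"
  assumes "0 < \<alpha>" "\<alpha> < 1" "0 < \<epsilon>" "0 < \<delta>"
    and mono: "\<forall>t x p r s. t \<in> {0..T} \<longrightarrow> r \<le> s \<longrightarrow> H t x r p \<le> H t x s p"
    and u: "continuous_on ({0..T} \<times> UNIV) (\<lambda>(t,x). u t x)" "visc_sub \<alpha> T H u"
    and v: "continuous_on ({0..T} \<times> UNIV) (\<lambda>(t,x). v t x)" "visc_super \<alpha> T H v"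
    and uR: "\<And>t x. t \<in> {0..T} \<Longrightarrow> \<bar>u t x\<bar> \<le> R" and vR: "\<And>t x. t \<in> {0..T} \<Longrightarrow> \<bar>v t x\<bar> \<le> R"
    and max: "doubling_max T \<epsilon> \<delta> u v tb sb xb yb" and "v sb yb \<le> u tb xb"
    and r: "0 < r" "r \<le> \<tau>0" "\<tau>0 \<le> tb" "\<tau>0 \<le> sb" "r \<le> 1"
  defines "p \<equiv> (1 / \<epsilon>) *\<^sub>R (xb - yb)"
  shows "(u tb xb - u 0 xb - (v sb yb - v 0 yb)) / tb powr \<alpha>
    \<le> \<alpha> * r / \<delta> + 4 * \<alpha> * R * \<tau>0 powr (- \<alpha> - 1) * \<bar>tb - sb\<bar>
       + Gamma (1 - \<alpha>) * (H sb yb (v sb yb) p - H tb xb (v sb yb) p)"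
proof -
  have tb: "tb \<in> {0..T}" and sb: "sb \<in> {0..T}" using max unfolding doubling_max_def by auto
  have "continuous_on {0..T} (\<lambda>\<tau>. u \<tau> xb)"
    by (rule continuous_on_compose2[OF u(1), of _ "\<lambda>\<tau>. (\<tau>, xb)", simplified]) (auto intro!: continuous_intros)
  moreover have "continuous_on {0..T} (\<lambda>\<tau>. v \<tau> yb)"
    by (rule continuous_on_compose2[OF v(1), of _ "\<lambda>\<tau>. (\<tau>, yb)", simplified]) (auto intro!: continuous_intros)
  ultimately have "(u tb xb - u 0 xb - (v sb yb - v 0 yb)) / tb powr \<alpha> - 4 * \<alpha> * R * \<tau>0 powr (- \<alpha> - 1) * \<bar>tb - sb\<bar>
      \<le> Gamma (1 - \<alpha>) * (K_op \<alpha> r u tb xb - K_op \<alpha> r v sb yb)"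
    using assms(1,2) r tb sb uR vR doubling_max_time_increments[OF max]
    by (intro K_op_difference_ge[where T = T]) auto
  moreover have "Gamma (1 - \<alpha>) * (K_op \<alpha> r u tb xb - K_op \<alpha> r v sb yb
      + H tb xb (u tb xb) p - H sb yb (v sb yb) p) \<le> \<alpha> * r / \<delta>"
    unfolding p_def using r by (intro doubling_max_viscosity_inequality[OF assms(1-4) u(2) v(2) max]) auto
  moreover have "Gamma (1 - \<alpha>) * H tb xb (v sb yb) p \<le> Gamma (1 - \<alpha>) * H tb xb (u tb xb) p"
    using mono tb \<open>v sb yb \<le> u tb xb\<close> assms(2) by (intro mult_left_mono) auto
  ultimately show ?thesis by (simp add: algebra_simps)
qed

section \<open>Comparison principle\<close>

lemma comparison_principle:
  fixes H :: "real \<Rightarrow> real ^ 'd \<Rightarrow> real \<Rightarrow> real ^ 'd \<Rightarrow> real"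
    and u v :: "real \<Rightarrow> real ^ 'd \<Rightarrow> real"
  assumes "0 < T" "0 < \<alpha>" "\<alpha> < 1"
    and H_cont: "continuous_on ({0..T} \<times> UNIV \<times> UNIV \<times> UNIV) (\<lambda>(t,x,r,p). H t x r p)"
    and H_mod: "\<exists>\<omega>. modulus \<omega> \<and> (\<forall>t x y r p. t \<in> {0..T} \<longrightarrow>
               \<bar>H t x r p - H t y r p\<bar> \<le> \<omega> (norm (x - y) * (1 + norm p)))"
    and H_mono: "\<forall>t x p r s. t \<in> {0..T} \<longrightarrow> r \<le> s \<longrightarrow> H t x r p \<le> H t x s p"
    and u: "continuous_on ({0..T} \<times> UNIV) (\<lambda>(t,x). u t x)" "visc_sub \<alpha> T H u"
    and v: "continuous_on ({0..T} \<times> UNIV) (\<lambda>(t,x). v t x)" "visc_super \<alpha> T H v"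
    and "0 \<le> M" and init: "\<And>x. u 0 x - v 0 x \<le> M"
    and "t \<in> {0..T}"
  shows "u t x - v t x \<le> M"
proof (rule ccontr)
  assume "\<not> u t x - v t x \<le> M"
  define \<theta> where "\<theta> = u t x - v t x - M"
  have "0 < \<theta>" using \<open>\<not> u t x - v t x \<le> M\<close> unfolding \<theta>_def by simp
  have u_per: "periodic_x u" and v_per: "periodic_x v"
    using u(2) v(2) unfolding visc_sub_def visc_super_def by auto
  obtain R where R: "0 < R" and uR: "\<And>t x. t \<in> {0..T} \<Longrightarrow> \<bar>u t x\<bar> \<le> R"
    and vR: "\<And>t x. t \<in> {0..T} \<Longrightarrow> \<bar>v t x\<bar> \<le> R"
    using periodic_x_bounded_pair[OF u(1) u_per v(1) v_per] by blast
  define G where "G = Gamma (1 - \<alpha>)"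
  have G: "0 < G" unfolding G_def using assms(3) by simp
  \<comment> \<open>The memory term at the doubling maximum is at least about c, so the parameters below are
    chosen to make each error term of the key estimate at most c / 8.\<close>
  define c where "c = \<theta> / T powr \<alpha>"
  have c: "0 < c" unfolding c_def using \<open>0 < \<theta>\<close> assms(1) by simp

  obtain \<omega> where "modulus \<omega>"
    and \<omega>: "\<And>t x y r p. t \<in> {0..T} \<Longrightarrow> \<bar>H t x r p - H t y r p\<bar> \<le> \<omega> (norm (x - y) * (1 + norm p))"
    using H_mod by blast
  obtain \<sigma> where "0 < \<sigma>" and \<sigma>: "\<And>s. 0 \<le> s \<Longrightarrow> s < \<sigma> \<Longrightarrow> \<omega> s < c / (8 * G)"
    using modulus_small[OF \<open>modulus \<omega>\<close>, of "c / (8 * G)"] c G by auto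
  define tol where "tol = min (\<theta> / 8) (\<sigma> / 4)"
  have tol: "0 < tol" "tol \<le> \<theta> / 8" "tol \<le> \<sigma> / 4" unfolding tol_def using \<open>0 < \<theta>\<close> \<open>0 < \<sigma>\<close> by auto
  obtain du where "0 < du" and du: "\<And>s s' y y'. s \<in> {0..T} \<Longrightarrow> s' \<in> {0..T} \<Longrightarrow> \<bar>s - s'\<bar> < du \<Longrightarrow>
      dist y y' < du \<Longrightarrow> \<bar>u s y - u s' y'\<bar> < \<theta> / 4"
    using periodic_x_uniformly_continuous[OF u(1) u_per, of "\<theta> / 4"] \<open>0 < \<theta>\<close> by auto
  obtain dv where "0 < dv" and dv: "\<And>s s' y y'. s \<in> {0..T} \<Longrightarrow> s' \<in> {0..T} \<Longrightarrow> \<bar>s - s'\<bar> < dv \<Longrightarrow>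
      dist y y' < dv \<Longrightarrow> \<bar>v s y - v s' y'\<bar> < tol"
    using periodic_x_uniformly_continuous[OF v(1) v_per, of tol] tol(1) by auto
  define \<eta> where "\<eta> = min du dv"
  have "0 < \<eta>" unfolding \<eta>_def using \<open>0 < du\<close> \<open>0 < dv\<close> by simp
  define \<tau>0 where "\<tau>0 = \<eta> / 2"
  define \<rho> where "\<rho> = min (min \<eta> (\<sigma> / 2)) 1"
  have "0 < \<rho>" unfolding \<rho>_def using \<open>0 < \<eta>\<close> \<open>0 < \<sigma>\<close> by simp
  define \<epsilon> where "\<epsilon> = \<rho>\<^sup>2 / (16 * R)"
  have "0 < \<epsilon>" unfolding \<epsilon>_def using \<open>0 < \<rho>\<close> R by simp
  obtain L where L: "\<And>y. y \<in> cbox (0 :: real ^ 'd) 1 \<Longrightarrow> norm y \<le> L"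
    using bounded_cbox[of "0 :: real ^ 'd" 1] unfolding bounded_iff by blast
  obtain dH where "0 < dH" and dH: "\<And>s s' y r q. s \<in> {0..T} \<Longrightarrow> s' \<in> {0..T} \<Longrightarrow> norm y \<le> L + 1 \<Longrightarrow>
      \<bar>r\<bar> \<le> R \<Longrightarrow> norm q \<le> 1 / \<epsilon> \<Longrightarrow> \<bar>s - s'\<bar> < dH \<Longrightarrow> \<bar>H s y r q - H s' y r q\<bar> < c / (8 * G)"
    using continuous_on_uniform_in_time[OF H_cont, where e = "c / (8 * G)" and Lx = "L + 1" and Lr = R
        and Lp = "1 / \<epsilon>"] c G by auto
  define Lk where "Lk = 4 * \<alpha> * R * \<tau>0 powr (- \<alpha> - 1)"
  have "0 < Lk" unfolding Lk_def \<tau>0_def using assms(2) R \<open>0 < \<eta>\<close> by simp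
  define \<xi> where "\<xi> = min (min \<tau>0 dH) (c / (8 * Lk))"
  have "0 < \<xi>" unfolding \<xi>_def \<tau>0_def using \<open>0 < \<eta>\<close> \<open>0 < dH\<close> c \<open>0 < Lk\<close> by simp
  define \<delta> where "\<delta> = \<xi>\<^sup>2 / (16 * R)"
  have "0 < \<delta>" unfolding \<delta>_def using \<open>0 < \<xi>\<close> R by simp
  define r where "r = min \<tau>0 (min 1 (c * \<delta> / (8 * \<alpha>)))"
  have r: "0 < r" "r \<le> \<tau>0" "r \<le> 1" "r \<le> c * \<delta> / (8 * \<alpha>)"
    unfolding r_def \<tau>0_def using \<open>0 < \<eta>\<close> c \<open>0 < \<delta>\<close> assms(2) by auto
  then have r_small: "\<alpha> * r / \<delta> \<le> c / 8"
    using \<open>0 < \<delta>\<close> assms(2) by (simp add: field_simps)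

  obtain tb sb xb yb where max: "doubling_max T \<epsilon> \<delta> u v tb sb xb yb" and "xb \<in> cbox 0 1"
    using doubling_max_exists[OF less_imp_le[OF assms(1)] \<open>0 < \<epsilon>\<close> \<open>0 < \<delta>\<close> u(1) u_per v(1) v_per uR vR] by blast
  have tb: "tb \<in> {0..T}" and sb: "sb \<in> {0..T}" using max unfolding doubling_max_def by auto
  have "2 * (norm (xb - yb))\<^sup>2 \<le> \<rho>\<^sup>2" "2 * \<bar>tb - sb\<bar>\<^sup>2 \<le> \<xi>\<^sup>2"
    using doubling_max_penalty_bound[OF max \<open>0 < \<epsilon>\<close> \<open>0 < \<delta>\<close> _ uR vR] assms(1) R
    unfolding \<epsilon>_def \<delta>_def by auto
  then have sq: "(norm (xb - yb))\<^sup>2 < \<rho>\<^sup>2" "\<bar>tb - sb\<bar>\<^sup>2 < \<xi>\<^sup>2"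
    using zero_less_power[OF \<open>0 < \<rho>\<close>, of 2] zero_less_power[OF \<open>0 < \<xi>\<close>, of 2] by linarith+
  have nx: "norm (xb - yb) < \<rho>" using sq(1) by (rule power_less_imp_less_base) (use \<open>0 < \<rho>\<close> in simp)
  have dt: "\<bar>tb - sb\<bar> < \<xi>" using sq(2) by (rule power_less_imp_less_base) (use \<open>0 < \<xi>\<close> in simp)
  have diag: "M + \<theta> \<le> u tb xb - v sb yb"
    using doubling_max_diagonal_le[OF max \<open>t \<in> {0..T}\<close>, of x] doubling_le_difference[OF \<open>0 < \<epsilon>\<close> \<open>0 < \<delta>\<close>, of u v tb sb xb yb]
    unfolding \<theta>_def by linarith
  have "\<rho> \<le> \<eta>" "\<rho> \<le> \<sigma> / 2" "\<rho> \<le> 1" "\<eta> \<le> du" "\<eta> \<le> dv" unfolding \<rho>_def \<eta>_def by auto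
  have v_space: "\<bar>v s xb - v s yb\<bar> < tol" if "s \<in> {0..T}" for s
    using dv[OF that that, of xb yb] nx \<open>\<rho> \<le> \<eta>\<close> \<open>\<eta> \<le> dv\<close> \<open>0 < dv\<close> by (simp add: dist_norm)
  define p where "p = (1 / \<epsilon>) *\<^sub>R (xb - yb)"
  have "(norm (xb - yb))\<^sup>2 / \<epsilon> < \<sigma> / 2"
    using doubling_max_space_bound[OF max \<open>0 < \<epsilon>\<close>] v_space[OF sb] tol(3)
    unfolding abs_less_iff right_diff_distrib by linarith
  moreover have "norm p = norm (xb - yb) / \<epsilon>" unfolding p_def using \<open>0 < \<epsilon>\<close> by simp
  then have "norm (xb - yb) * (1 + norm p) = norm (xb - yb) + (norm (xb - yb))\<^sup>2 / \<epsilon>"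
    by (simp add: algebra_simps power2_eq_square)
  ultimately have p_small: "norm (xb - yb) * (1 + norm p) < \<sigma>"
    using nx \<open>\<rho> \<le> \<sigma> / 2\<close> by linarith
  have init_gap: "u 0 xb - v 0 yb < M + tol"
    using init[of xb] v_space[of 0] assms(1) unfolding abs_less_iff by auto
  have times: "\<tau>0 \<le> tb \<and> \<tau>0 \<le> sb"
  proof (rule ccontr)
    assume "\<not> (\<tau>0 \<le> tb \<and> \<tau>0 \<le> sb)"
    moreover have "tb - sb < \<tau>0" "sb - tb < \<tau>0" using dt unfolding \<xi>_def by auto
    ultimately have "tb < du" "sb < dv"
      using \<open>\<eta> \<le> du\<close> \<open>\<eta> \<le> dv\<close> unfolding \<tau>0_def by auto
    then have "\<bar>u tb xb - u 0 xb\<bar> < \<theta> / 4" "\<bar>v sb yb - v 0 yb\<bar> < tol"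
      using du[of tb 0 xb xb] dv[of sb 0 yb yb] tb sb \<open>0 < du\<close> \<open>0 < dv\<close> by auto
    then show False using diag init_gap tol(2) unfolding abs_less_iff by linarith
  qed
  have "v sb yb \<le> u tb xb" using diag \<open>0 \<le> M\<close> \<open>0 < \<theta>\<close> by linarith
  note key = doubling_max_key_estimate[OF assms(2,3) \<open>0 < \<epsilon>\<close> \<open>0 < \<delta>\<close> H_mono u v uR vR max this
      r(1,2) conjunct1[OF times] conjunct2[OF times] r(3), folded p_def G_def Lk_def]
  have "7 * \<theta> / 8 \<le> u tb xb - u 0 xb - (v sb yb - v 0 yb)" using diag init_gap tol(2) by linarith
  moreover have "0 < tb powr \<alpha>" "tb powr \<alpha> \<le> T powr \<alpha>"
    using times tb \<open>0 < \<eta>\<close> assms(2) unfolding \<tau>0_def by (auto intro: powr_mono2)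
  ultimately have "(7 * \<theta> / 8) / T powr \<alpha> \<le> (u tb xb - u 0 xb - (v sb yb - v 0 yb)) / tb powr \<alpha>"
    using \<open>0 < \<theta>\<close> by (intro frac_le) auto
  then have "7 * c / 8 \<le> (u tb xb - u 0 xb - (v sb yb - v 0 yb)) / tb powr \<alpha>"
    unfolding c_def by simp
  moreover have "Lk * \<bar>tb - sb\<bar> \<le> c / 8"
    using dt \<open>0 < Lk\<close> unfolding \<xi>_def by (simp add: field_simps)
  moreover have "\<bar>H tb xb (v sb yb) p - H tb yb (v sb yb) p\<bar> < c / (8 * G)"
    using \<omega>[OF tb, of xb "v sb yb" p yb] \<sigma>[OF _ p_small] by simp
  moreover have "\<bar>H tb yb (v sb yb) p - H sb yb (v sb yb) p\<bar> < c / (8 * G)"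
  proof (rule dH[OF tb sb _ vR[OF sb]])
    show "norm yb \<le> L + 1"
      using L[OF \<open>xb \<in> cbox 0 1\<close>] nx \<open>\<rho> \<le> 1\<close> norm_triangle_ineq3[of xb yb] by linarith
    show "norm p \<le> 1 / \<epsilon>"
      using nx \<open>\<rho> \<le> 1\<close> \<open>0 < \<epsilon>\<close> unfolding p_def by (simp add: divide_right_mono)
    show "\<bar>tb - sb\<bar> < dH" using dt unfolding \<xi>_def by simp
  qed
  ultimately have "H sb yb (v sb yb) p - H tb xb (v sb yb) p < 2 * (c / (8 * G))"
    and "7 * c / 8 \<le> c / 8 + c / 8 + G * (H sb yb (v sb yb) p - H tb xb (v sb yb) p)"
    using key r_small unfolding abs_less_iff by linarith+
  moreover have "G * (2 * (c / (8 * G))) = c / 4" using G by simp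
  ultimately show False using mult_strict_left_mono[of _ _ G] G c by fastforce
qed

theorem corollary3p4:
  fixes \<alpha> T :: real
    and H :: "real \<Rightarrow> real ^ 'd \<Rightarrow> real \<Rightarrow> real ^ 'd \<Rightarrow> real"
    and u0 :: "real ^ 'd \<Rightarrow> real"
    and u v :: "real \<Rightarrow> real ^ 'd \<Rightarrow> real"
  assumes T_pos: "0 < T" and alpha: "0 < \<alpha>" "\<alpha> < 1"
    and H_per: "\<forall>t x r p k. int_vec k \<longrightarrow> H t (x + k) r p = H t x r p"
    and A1: "continuous_on ({0..T} \<times> UNIV \<times> UNIV \<times> UNIV) (\<lambda>(t,x,r,p). H t x r p)"
    and A2: "\<exists>\<omega>. modulus \<omega> \<and> (\<forall>t x y r p. t \<in> {0..T} \<longrightarrow>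
               \<bar>H t x r p - H t y r p\<bar> \<le> \<omega> (norm (x - y) * (1 + norm p)))"
    and A3: "\<forall>t x p r s. t \<in> {0..T} \<longrightarrow> r \<le> s \<longrightarrow> H t x r p \<le> H t x s p"
    and A4: "continuous_on UNIV u0" "periodic_sp u0"
    and u_sol: "visc_sol \<alpha> T H u" and v_sol: "visc_sol \<alpha> T H v"
  shows "(\<forall>t \<in> {0..T}. \<forall>x. \<bar>u t x - v t x\<bar> \<le> (SUP y. \<bar>u 0 y - v 0 y\<bar>)) \<and>
         ((\<forall>x. u 0 x = u0 x) \<and> (\<forall>x. v 0 x = u0 x) \<longrightarrow> (\<forall>t \<in> {0..T}. \<forall>x. u t x = v t x))"
proof -
  have u: "continuous_on ({0..T} \<times> UNIV) (\<lambda>(t,x). u t x)" "visc_sub \<alpha> T H u" "visc_super \<alpha> T H u"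
    and v: "continuous_on ({0..T} \<times> UNIV) (\<lambda>(t,x). v t x)" "visc_sub \<alpha> T H v" "visc_super \<alpha> T H v"
    using u_sol v_sol unfolding visc_sol_def by auto
  have "0 \<in> {0..T}" using T_pos by simp
  have u_per: "periodic_x u" and v_per: "periodic_x v" using u(2) v(2) unfolding visc_sub_def by auto
  obtain R where "0 < R" and uR: "\<And>t x. t \<in> {0..T} \<Longrightarrow> \<bar>u t x\<bar> \<le> R"
    and vR: "\<And>t x. t \<in> {0..T} \<Longrightarrow> \<bar>v t x\<bar> \<le> R"
    using periodic_x_bounded_pair[OF u(1) u_per v(1) v_per] by blast
  have "\<bar>u 0 y - v 0 y\<bar> \<le> 2 * R" for y
    using uR[OF \<open>0 \<in> {0..T}\<close>, of y] vR[OF \<open>0 \<in> {0..T}\<close>, of y] abs_triangle_ineq4[of "u 0 y" "v 0 y"] by linarith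
  then have "bdd_above (range (\<lambda>y. \<bar>u 0 y - v 0 y\<bar>))" by (rule bdd_aboveI2)
  then have M: "\<bar>u 0 y - v 0 y\<bar> \<le> (SUP y. \<bar>u 0 y - v 0 y\<bar>)" for y by (rule cSUP_upper[OF UNIV_I])
  define S where "S = (SUP y. \<bar>u 0 y - v 0 y\<bar>)"
  have "0 \<le> S" using M[of 0] unfolding S_def by linarith
  have "u 0 y - v 0 y \<le> S" "v 0 y - u 0 y \<le> S" for y using M[of y] unfolding S_def by auto
  then have "u t x - v t x \<le> S" "v t x - u t x \<le> S" if "t \<in> {0..T}" for t x
    using comparison_principle[OF T_pos alpha A1 A2 A3 u(1,2) v(1,3) \<open>0 \<le> S\<close> _ that]
      comparison_principle[OF T_pos alpha A1 A2 A3 v(1,2) u(1,3) \<open>0 \<le> S\<close> _ that] by blast+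
  then have "\<forall>t \<in> {0..T}. \<forall>x. \<bar>u t x - v t x\<bar> \<le> S" by (simp add: abs_le_iff)
  moreover have "S = 0" if "\<forall>x. u 0 x = u0 x" "\<forall>x. v 0 x = u0 x" using that unfolding S_def by simp
  ultimately show ?thesis unfolding S_def[symmetric] by force
qed

end
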